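(* Let $\alpha\in(-1,1)$. For every integer $k\ge0$, $$\Phi_k=\alpha\,\tilde\Phi_{k+1}+\beta_k\,\tilde\Phi_k,\qquad \frac{\partial\Phi_k}{\partial\alpha}=-4\,\tilde\Phi_{k+1}+\gamma_k\,\tilde\Phi_k,$$ where $\beta_k=\dfrac{K_{k,k}}{\tilde K_{k,k}}$ and $\gamma_k=\dfrac{1}{\tilde K_{k,k}}\dfrac{\partial K_{k,k}}{\partial\alpha}$.
   Context: For a parameter $\alpha\in(-1,1)$ define on $[-1,1]$ the weights $\omega(\mu)=(1+\alpha\mu)^{-4}$ and $\tilde\omega(\mu)=(1+\alpha\mu)^{-5}$. Let $\{\phi_k\}_{k\ge0}$ (resp. $\{\tilde\phi_k\}_{k\ge0}$) be the monic orthogonal polynomials on $[-1,1]$ with respect to $\omega$ (resp. $\tilde\omega$): $\phi_k$ is monic of degree $k$ and $\int_{-1}^1\phi_j\phi_k\,\omega\,d\mu=0$ for $j\neq k$ (similarly for $\tilde\phi_k$ with $\tilde\omega$); their coefficients depend smoothly on $\alpha$. Set $\Phi_k=\omega\phi_k$, $\tilde\Phi_k=\tilde\omega\tilde\phi_k$, $K_{j,k}=\int_{-1}^1\mu^j\phi_k\,\omega\,d\mu$ and $\tilde K_{j,k}=\int_{-1}^1\mu^j\tilde\phi_k\,\tilde\omega\,d\mu$ (so $K_{k,k}=\int_{-1}^1\phi_k^2\omega\,d\mu>0$ and $\tilde K_{k,k}>0$). *)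

theory Defs
  imports "HOL-Analysis.Analysis" "HOL-Computational_Algebra.Polynomial"
begin

definition omega :: "real \<Rightarrow> real \<Rightarrow> real" where
  "omega a \<mu> = inverse ((1 + a * \<mu>) ^ 4)"

definition omega_t :: "real \<Rightarrow> real \<Rightarrow> real" where
  "omega_t a \<mu> = inverse ((1 + a * \<mu>) ^ 5)"

definition monic_orth_family :: "(real \<Rightarrow> real) \<Rightarrow> (nat \<Rightarrow> real poly) \<Rightarrow> bool" where
  "monic_orth_family w phi \<longleftrightarrow>
     (\<forall>k. degree (phi k) = k \<and> lead_coeff (phi k) = 1) \<and>
     (\<forall>j k. j \<noteq> k \<longrightarrow>
        integral {-1..1} (\<lambda>\<mu>. poly (phi j) \<mu> * poly (phi k) \<mu> * w \<mu>) = 0)"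

definition orth_polys :: "(real \<Rightarrow> real) \<Rightarrow> nat \<Rightarrow> real poly" where
  "orth_polys w = (THE phi. monic_orth_family w phi)"

definition phi :: "real \<Rightarrow> nat \<Rightarrow> real poly" where
  "phi a = orth_polys (omega a)"

definition phi_t :: "real \<Rightarrow> nat \<Rightarrow> real poly" where
  "phi_t a = orth_polys (omega_t a)"

definition Phi :: "real \<Rightarrow> nat \<Rightarrow> real \<Rightarrow> real" where
  "Phi a k \<mu> = omega a \<mu> * poly (phi a k) \<mu>"

definition Phi_t :: "real \<Rightarrow> nat \<Rightarrow> real \<Rightarrow> real" where
  "Phi_t a k \<mu> = omega_t a \<mu> * poly (phi_t a k) \<mu>"

definition K :: "real \<Rightarrow> nat \<Rightarrow> nat \<Rightarrow> real" where
  "K a j k = integral {-1..1} (\<lambda>\<mu>. \<mu> ^ j * poly (phi a k) \<mu> * omega a \<mu>)"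

definition K_t :: "real \<Rightarrow> nat \<Rightarrow> nat \<Rightarrow> real" where
  "K_t a j k = integral {-1..1} (\<lambda>\<mu>. \<mu> ^ j * poly (phi_t a k) \<mu> * omega_t a \<mu>)"

end

theory Submission
  imports Defs
begin

text \<open>Since \<open>\<omega> = (1 + \<alpha>\<mu>) \<omega>~\<close>, the polynomial \<open>(1 + \<alpha>\<mu>) \<phi>\<^sub>k\<close> has degree \<open>k + 1\<close>, leading
  coefficient \<open>\<alpha>\<close>, and is \<open>\<omega>~\<close>-orthogonal to every polynomial of degree \<open>< k\<close>; so it is a
  combination of \<open>\<phi>~\<^sub>k\<^sub>+\<^sub>1\<close> and \<open>\<phi>~\<^sub>k\<close> alone, and its \<open>\<phi>~\<^sub>k\<close>-component is
  \<open>\<langle>\<phi>\<^sub>k, \<phi>~\<^sub>k\<rangle>\<^sub>\<omega> / K~\<^sub>k\<^sub>,\<^sub>k = K\<^sub>k\<^sub>,\<^sub>k / K~\<^sub>k\<^sub>,\<^sub>k\<close>.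
  Similarly \<open>\<partial>\<^sub>\<alpha>\<Phi>\<^sub>k = \<omega>~ Q\<close> with \<open>Q = -4\<mu>\<phi>\<^sub>k + (1 + \<alpha>\<mu>) \<partial>\<^sub>\<alpha>\<phi>\<^sub>k\<close> of degree \<open>k + 1\<close>
  and leading coefficient \<open>-4\<close>. Differentiating \<open>\<langle>\<phi>\<^sub>k, \<phi>~\<^sub>j\<rangle>\<^sub>\<omega> = 0\<close> (\<open>j < k\<close>) and
  \<open>\<langle>\<phi>\<^sub>k, \<phi>~\<^sub>k\<rangle>\<^sub>\<omega> = K\<^sub>k\<^sub>,\<^sub>k\<close> in \<open>\<alpha>\<close> (with \<open>\<phi>~\<close> held fixed) gives exactly
  \<open>\<langle>Q, \<phi>~\<^sub>j\<rangle>\<^sub>\<omega>\<^sub>~ = 0\<close> and \<open>\<langle>Q, \<phi>~\<^sub>k\<rangle>\<^sub>\<omega>\<^sub>~ = \<partial>\<^sub>\<alpha>K\<^sub>k\<^sub>,\<^sub>k\<close>, since \<open>\<partial>\<^sub>\<alpha>\<omega> = -4\<mu>\<omega>~\<close>.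
  That \<open>\<phi>\<^sub>k\<close> depends differentiably on \<open>\<alpha>\<close> at all comes from Gram--Schmidt: its
  coefficients are rational functions of the moments of \<open>\<omega>\<close>, which are differentiable
  by differentiation under the integral sign.\<close>

section \<open>Orthogonal polynomials for a positive weight on [-1, 1]\<close>

definition inner_poly :: "(real \<Rightarrow> real) \<Rightarrow> real poly \<Rightarrow> real poly \<Rightarrow> real" where
  "inner_poly w p q = integral {-1..1} (\<lambda>\<mu>. poly p \<mu> * poly q \<mu> * w \<mu>)"

definition moment :: "(real \<Rightarrow> real) \<Rightarrow> nat \<Rightarrow> real" where
  "moment w n = integral {-1..1} (\<lambda>\<mu>. \<mu> ^ n * w \<mu>)"

text \<open>Agrees with \<open>\<integral> \<mu>^s p q w\<close> only for \<open>degree p, degree q \<le> n\<close>. Being an explicit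
  polynomial in coefficients and moments, it makes the Gram--Schmidt coefficients visibly
  differentiable in the weight parameter.\<close>
definition moment_form :: "nat \<Rightarrow> nat \<Rightarrow> (real \<Rightarrow> real) \<Rightarrow> real poly \<Rightarrow> real poly \<Rightarrow> real" where
  "moment_form n s w p q = (\<Sum>i\<le>n. \<Sum>j\<le>n. coeff p i * coeff q j * moment w (i + j + s))"

definition pos_weight :: "(real \<Rightarrow> real) \<Rightarrow> bool" where
  "pos_weight w \<longleftrightarrow> continuous_on {-1..1} w \<and> (\<forall>\<mu>\<in>{-1..1}. w \<mu> > 0)"

lemma poly_eq_sum_coeff_atMost:
  fixes p :: "real poly"
  assumes "degree p \<le> n"
  shows "poly p x = (\<Sum>i\<le>n. coeff p i * x ^ i)"
  unfolding poly_altdef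
  by (rule sum.mono_neutral_left) (use assms in \<open>auto simp: coeff_eq_0\<close>)

lemma moment_form_eq_integral:
  fixes w :: "real \<Rightarrow> real"
  assumes w: "continuous_on {-1..1} w" and "degree p \<le> n" "degree q \<le> n"
  shows "moment_form n s w p q = integral {-1..1} (\<lambda>\<mu>. \<mu> ^ s * poly p \<mu> * poly q \<mu> * w \<mu>)"
proof -
  have integrable: "(\<lambda>\<mu>. c * (\<mu> ^ m * w \<mu>)) integrable_on {-1..1}" for c m
    by (intro integrable_continuous_interval continuous_intros w)
  have "(\<lambda>\<mu>. \<mu> ^ s * poly p \<mu> * poly q \<mu> * w \<mu>) =
        (\<lambda>\<mu>. \<Sum>i\<le>n. \<Sum>j\<le>n. coeff p i * coeff q j * (\<mu> ^ (i + j + s) * w \<mu>))"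
    using assms by (auto simp: poly_eq_sum_coeff_atMost[of p n] poly_eq_sum_coeff_atMost[of q n]
        sum_distrib_left sum_distrib_right power_add mult_ac intro!: ext sum.cong)
  then show ?thesis
    unfolding moment_form_def moment_def
    by (simp add: integral_sum integrable integrable_sum)
qed

lemma moment_form_eq_inner_poly:
  fixes w :: "real \<Rightarrow> real"
  assumes "continuous_on {-1..1} w" "degree p \<le> n" "degree q \<le> n"
  shows "moment_form n 0 w p q = inner_poly w p q"
  using moment_form_eq_integral[OF assms, of 0] unfolding inner_poly_def by simp

lemma inner_poly_commute: "inner_poly w p q = inner_poly w q p"
  unfolding inner_poly_def by (simp add: mult_ac)

lemma inner_poly_smult_left: "inner_poly w (smult c p) q = c * inner_poly w p q"
  unfolding inner_poly_def by (simp add: mult.assoc)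

lemma integrable_inner_poly:
  fixes w :: "real \<Rightarrow> real" and p q :: "real poly"
  assumes "continuous_on {-1..1} w"
  shows "(\<lambda>\<mu>. poly p \<mu> * poly q \<mu> * w \<mu>) integrable_on {-1..1}"
  by (rule integrable_continuous_interval) (use assms in \<open>intro continuous_intros\<close>)

lemma inner_poly_add_left:
  "continuous_on {-1..1} w \<Longrightarrow> inner_poly w (p + q) r = inner_poly w p r + inner_poly w q r"
  unfolding inner_poly_def by (simp add: distrib_right integral_add integrable_inner_poly)

lemma inner_poly_diff_left:
  "continuous_on {-1..1} w \<Longrightarrow> inner_poly w (p - q) r = inner_poly w p r - inner_poly w q r"
  unfolding inner_poly_def by (simp add: left_diff_distrib integral_diff integrable_inner_poly)

lemma inner_poly_sum_left:
  assumes "continuous_on {-1..1} w"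
  shows "inner_poly w (\<Sum>a\<in>A. f a) r = (\<Sum>a\<in>A. inner_poly w (f a) r)"
proof (induction A rule: infinite_finite_induct)
  case (infinite A) then show ?case by (simp add: inner_poly_def)
next
  case empty then show ?case by (simp add: inner_poly_def)
next
  case (insert x F) then show ?case by (simp add: inner_poly_add_left[OF assms])
qed

lemma inner_poly_self_pos:
  assumes w: "pos_weight w" and "p \<noteq> 0"
  shows "inner_poly w p p > 0"
proof -
  have cont: "continuous_on {-1..1} (\<lambda>\<mu>. poly p \<mu> * poly p \<mu> * w \<mu>)"
    using w unfolding pos_weight_def by (intro continuous_intros) auto
  have nonneg: "poly p \<mu> * poly p \<mu> * w \<mu> \<ge> 0" if "\<mu> \<in> {-1..1}" for \<mu>
    using w that unfolding pos_weight_def by (simp add: less_imp_le)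
  have "inner_poly w p p \<ge> 0"
    unfolding inner_poly_def
    by (rule integral_nonneg[OF integrable_continuous_real[OF cont]]) (use nonneg in auto)
  moreover have "inner_poly w p p \<noteq> 0"
  proof
    assume "inner_poly w p p = 0"
    then have "\<forall>\<mu>\<in>{-1..1}. poly p \<mu> * poly p \<mu> * w \<mu> = 0"
      using integral_eq_0_iff[OF cont _ nonneg] unfolding inner_poly_def by auto
    then have "{-1..1::real} \<subseteq> {\<mu>. poly p \<mu> = 0}"
      using w unfolding pos_weight_def by force
    moreover have "infinite {-1..1::real}" by simp
    ultimately show False using poly_roots_finite[OF \<open>p \<noteq> 0\<close>] finite_subset by blast
  qed
  ultimately show ?thesis by simp
qed

lemma monic_span:
  fixes f :: "nat \<Rightarrow> real poly"
  assumes deg: "\<And>j. degree (f j) = j" and lead: "\<And>j. coeff (f j) j = 1" and "degree q \<le> n"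
  shows "\<exists>c. q = (\<Sum>j\<le>n. smult (c j) (f j))"
  using \<open>degree q \<le> n\<close>
proof (induction n arbitrary: q)
  case 0
  have "f 0 = 1" using deg[of 0] lead[of 0] degree_0_id[of "f 0"] by (simp add: one_pCons)
  moreover have "q = [:coeff q 0:]" using 0 by (metis degree_0_id le_0_eq)
  ultimately show ?case by (intro exI[of _ "\<lambda>_. coeff q 0"]) simp
next
  case (Suc n)
  define r where "r = q - smult (coeff q (Suc n)) (f (Suc n))"
  have "degree r \<le> n"
  proof (rule degree_le, intro allI impI)
    fix i assume "n < i"
    then consider "i = Suc n" | "Suc n < i" by linarith
    then show "coeff r i = 0"
      by cases (use Suc.prems deg[of "Suc n"] lead[of "Suc n"] in \<open>simp_all add: r_def coeff_eq_0\<close>)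
  qed
  then obtain c where c: "r = (\<Sum>j\<le>n. smult (c j) (f j))" using Suc.IH by blast
  have "(\<Sum>j\<le>n. smult ((c(Suc n := coeff q (Suc n))) j) (f j)) = r"
    unfolding c by (rule sum.cong) auto
  then show ?case
    by (intro exI[of _ "c(Suc n := coeff q (Suc n))"]) (simp add: r_def)
qed

context
  fixes w :: "real \<Rightarrow> real" and f :: "nat \<Rightarrow> real poly"
  assumes family: "monic_orth_family w f"
begin

lemma monic_orth_family_degree: "degree (f k) = k"
  using family unfolding monic_orth_family_def by blast

lemma monic_orth_family_lead: "coeff (f k) k = 1"
  using family unfolding monic_orth_family_def by metis

lemma monic_orth_family_nonzero: "f k \<noteq> 0"
  using monic_orth_family_lead[of k] by auto

lemma monic_orth_family_orth: "j \<noteq> k \<Longrightarrow> inner_poly w (f j) (f k) = 0"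
  using family unfolding monic_orth_family_def inner_poly_def by blast

lemma monic_orth_family_span: "degree q \<le> n \<Longrightarrow> \<exists>c. q = (\<Sum>j\<le>n. smult (c j) (f j))"
  by (rule monic_span[OF monic_orth_family_degree monic_orth_family_lead])

context
  assumes w: "continuous_on {-1..1} w"
begin

lemma inner_poly_lower_degree_eq_0:
  assumes "degree q < k"
  shows "inner_poly w q (f k) = 0"
proof -
  obtain m where k: "k = Suc m" using assms by (cases k) auto
  obtain c where c: "q = (\<Sum>j\<le>m. smult (c j) (f j))"
    using monic_orth_family_span[of q m] assms k by auto
  show ?thesis
    unfolding c using k
    by (simp add: inner_poly_sum_left[OF w] inner_poly_smult_left monic_orth_family_orth)
qed

lemma inner_poly_monic_eq:
  assumes "degree q \<le> k" "coeff q k = 1"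
  shows "inner_poly w q (f k) = inner_poly w (monom 1 k) (f k)"
proof -
  have "degree (q - monom 1 k) \<le> k" "coeff (q - monom 1 k) k = 0"
    using assms by (auto intro: degree_diff_le simp: degree_monom_eq)
  then have "q - monom 1 k = 0 \<or> degree (q - monom 1 k) < k"
    by (metis le_neq_implies_less leading_coeff_0_iff)
  then show ?thesis
  proof
    assume "degree (q - monom 1 k) < k"
    then have "inner_poly w (q - monom 1 k) (f k) = 0" by (rule inner_poly_lower_degree_eq_0)
    then show ?thesis by (simp add: inner_poly_diff_left[OF w])
  qed simp
qed

end

lemma monic_orth_family_expansion:
  assumes w: "pos_weight w" and R: "degree R \<le> Suc k"
    and orth: "\<And>j. j < k \<Longrightarrow> inner_poly w R (f j) = 0"
  shows "R = smult (coeff R (Suc k)) (f (Suc k))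
           + smult (inner_poly w R (f k) / inner_poly w (f k) (f k)) (f k)"
proof -
  have wc: "continuous_on {-1..1} w" using w unfolding pos_weight_def by blast
  define r where "r = R - smult (coeff R (Suc k)) (f (Suc k))"
  have "degree r \<le> Suc k" "coeff r (Suc k) = 0"
    using R monic_orth_family_degree[of "Suc k"] monic_orth_family_lead[of "Suc k"]
    by (auto simp: r_def intro: degree_diff_le order_trans[OF degree_smult_le])
  then have "degree r \<le> k"
    by (intro degree_le allI impI) (metis Suc_lessI coeff_eq_0 le_less_trans)
  then obtain c where c: "r = (\<Sum>j\<le>k. smult (c j) (f j))"
    using monic_orth_family_span by blast
  have inner_r: "inner_poly w r (f i) = c i * inner_poly w (f i) (f i)" if "i \<le> k" for i
  proof -
    have "inner_poly w r (f i) = (\<Sum>j\<le>k. c j * inner_poly w (f j) (f i))"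
      unfolding c by (simp add: inner_poly_sum_left[OF wc] inner_poly_smult_left)
    also have "\<dots> = (\<Sum>j\<le>k. if j = i then c i * inner_poly w (f i) (f i) else 0)"
      by (intro sum.cong) (auto simp: monic_orth_family_orth)
    also have "\<dots> = c i * inner_poly w (f i) (f i)"
      using that by simp
    finally show ?thesis .
  qed
  have inner_R: "inner_poly w r (f i) = inner_poly w R (f i)" if "i \<le> k" for i
    using that monic_orth_family_orth[of "Suc k" i]
    by (simp add: r_def inner_poly_diff_left[OF wc] inner_poly_smult_left)
  have pos: "inner_poly w (f i) (f i) > 0" for i
    by (rule inner_poly_self_pos[OF w monic_orth_family_nonzero])
  have "c j = 0" if "j < k" for j
    using inner_r[of j] inner_R[of j] orth[OF that] pos[of j] that by simp
  then have "r = (\<Sum>j\<le>k. if j = k then smult (c k) (f k) else 0)"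
    unfolding c by (intro sum.cong) auto
  then have "r = smult (c k) (f k)" by simp
  moreover have "c k = inner_poly w R (f k) / inner_poly w (f k) (f k)"
    using inner_r[of k] inner_R[of k] pos[of k] by (simp add: field_simps)
  ultimately show ?thesis unfolding r_def by (simp add: algebra_simps)
qed

end

lemma monic_orth_family_unique:
  assumes w: "pos_weight w" and f: "monic_orth_family w f" and g: "monic_orth_family w g"
  shows "f = g"
proof
  fix k
  have wc: "continuous_on {-1..1} w" using w unfolding pos_weight_def by blast
  define d where "d = f k - g k"
  have "degree d \<le> k" "coeff d k = 0"
    using monic_orth_family_degree[OF f, of k] monic_orth_family_degree[OF g, of k]
      monic_orth_family_lead[OF f, of k] monic_orth_family_lead[OF g, of k]
    by (auto simp: d_def intro: degree_diff_le)
  then have "d = 0 \<or> degree d < k"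
    by (metis le_neq_implies_less leading_coeff_0_iff)
  moreover have "inner_poly w d d = 0" if "degree d < k"
  proof -
    have "inner_poly w d d = inner_poly w d (f k) - inner_poly w d (g k)"
      by (simp add: d_def inner_poly_diff_left[OF wc] inner_poly_commute)
    then show ?thesis
      using inner_poly_lower_degree_eq_0[OF f wc that] inner_poly_lower_degree_eq_0[OF g wc that]
      by simp
  qed
  ultimately have "d = 0"
    using inner_poly_self_pos[OF w, of d] by fastforce
  then show "f k = g k" by (simp add: d_def)
qed

subsection \<open>Gram--Schmidt\<close>

fun gram_schmidt :: "(real \<Rightarrow> real) \<Rightarrow> nat \<Rightarrow> real poly" where
  "gram_schmidt w k = monom 1 k -
     (\<Sum>j<k. smult (moment_form k 0 w (monom 1 k) (gram_schmidt w j) /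
                   moment_form k 0 w (gram_schmidt w j) (gram_schmidt w j)) (gram_schmidt w j))"

declare gram_schmidt.simps [simp del]

lemma gram_schmidt_degree_lead: "degree (gram_schmidt w k) = k \<and> coeff (gram_schmidt w k) k = 1"
proof (induction k rule: less_induct)
  case (less k)
  define S where "S = (\<Sum>j<k. smult (moment_form k 0 w (monom 1 k) (gram_schmidt w j) /
      moment_form k 0 w (gram_schmidt w j) (gram_schmidt w j)) (gram_schmidt w j))"
  have gs: "gram_schmidt w k = monom 1 k - S"
    unfolding S_def by (rule gram_schmidt.simps)
  have "degree S \<le> k"
    unfolding S_def
    by (rule degree_sum_le) (use less in \<open>auto intro: order_trans[OF degree_smult_le]\<close>)
  moreover have "coeff S k = 0"
    unfolding S_def coeff_sum using less by (intro sum.neutral) (auto simp: coeff_eq_0)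
  ultimately have "coeff (gram_schmidt w k) k = 1" "degree (gram_schmidt w k) \<le> k"
    unfolding gs by (auto intro: degree_diff_le simp: degree_monom_eq)
  moreover have "k \<le> degree (gram_schmidt w k)"
    using calculation by (intro le_degree) simp
  ultimately show ?case by simp
qed

lemma gram_schmidt_degree: "degree (gram_schmidt w k) = k"
  and gram_schmidt_lead: "coeff (gram_schmidt w k) k = 1"
  using gram_schmidt_degree_lead by auto

lemma gram_schmidt_nonzero: "gram_schmidt w k \<noteq> 0"
  using gram_schmidt_lead[of w k] by auto

lemma gram_schmidt_orth:
  assumes w: "pos_weight w"
  shows "i < k \<Longrightarrow> inner_poly w (gram_schmidt w k) (gram_schmidt w i) = 0"
proof (induction k arbitrary: i rule: less_induct)
  case (less k)
  have wc: "continuous_on {-1..1} w" using w unfolding pos_weight_def by blast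
  let ?g = "gram_schmidt w"
  define c where "c j = inner_poly w (monom 1 k) (?g j) / inner_poly w (?g j) (?g j)" for j
  have "c j = moment_form k 0 w (monom 1 k) (?g j) / moment_form k 0 w (?g j) (?g j)" if "j < k" for j
    using that by (simp add: c_def moment_form_eq_inner_poly[OF wc] gram_schmidt_degree degree_monom_eq)
  then have gs: "?g k = monom 1 k - (\<Sum>j<k. smult (c j) (?g j))"
    by (subst gram_schmidt.simps) simp
  have orth: "inner_poly w (?g j) (?g i) = 0" if "j < k" "i \<noteq> j" for j
    using less.IH that less.prems inner_poly_commute by (metis linorder_neqE_nat)
  have "(\<Sum>j<k. c j * inner_poly w (?g j) (?g i))
      = (\<Sum>j<k. if j = i then c i * inner_poly w (?g i) (?g i) else 0)"
    using orth by (intro sum.cong) auto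
  also have "\<dots> = inner_poly w (monom 1 k) (?g i)"
    using less.prems inner_poly_self_pos[OF w gram_schmidt_nonzero[of w i]] by (simp add: c_def)
  finally show ?case
    unfolding gs by (simp add: inner_poly_diff_left[OF wc] inner_poly_sum_left[OF wc] inner_poly_smult_left)
qed

lemma monic_orth_family_gram_schmidt:
  assumes "pos_weight w"
  shows "monic_orth_family w (gram_schmidt w)"
  unfolding monic_orth_family_def inner_poly_def[symmetric]
  using gram_schmidt_orth[OF assms] inner_poly_commute
  by (metis gram_schmidt_degree gram_schmidt_lead linorder_neqE_nat)

lemma orth_polys_eq_gram_schmidt:
  assumes "pos_weight w"
  shows "orth_polys w = gram_schmidt w"
  unfolding orth_polys_def
  using monic_orth_family_gram_schmidt[OF assms] monic_orth_family_unique[OF assms] by blast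

lemma monic_orth_family_orth_polys:
  assumes "pos_weight w"
  shows "monic_orth_family w (orth_polys w)"
  using monic_orth_family_gram_schmidt[OF assms] orth_polys_eq_gram_schmidt[OF assms] by simp

section \<open>The weights \<open>(1 + \<alpha>\<mu>)\<^sup>-\<^sup>4\<close> and \<open>(1 + \<alpha>\<mu>)\<^sup>-\<^sup>5\<close>\<close>

lemma one_plus_mult_pos:
  fixes a \<mu> :: real
  assumes "a \<in> {-1<..<1}" "\<mu> \<in> {-1..1}"
  shows "1 + a * \<mu> > 0"
proof -
  have "\<bar>a\<bar> < 1" "\<bar>\<mu>\<bar> \<le> 1" using assms by auto
  then have "\<bar>a\<bar> * \<bar>\<mu>\<bar> < 1" using mult_left_le[of "\<bar>\<mu>\<bar>" "\<bar>a\<bar>"] by simp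
  then have "\<bar>a * \<mu>\<bar> < 1" by (simp add: abs_mult)
  then show ?thesis by linarith
qed

context
  fixes a :: real
  assumes a: "a \<in> {-1<..<1}"
begin

lemma continuous_on_omega: "continuous_on {-1..1} (omega a)"
  unfolding omega_def using one_plus_mult_pos[OF a]
  by (intro continuous_intros) (auto simp: less_imp_neq[symmetric])

lemma continuous_on_omega_t: "continuous_on {-1..1} (omega_t a)"
  unfolding omega_t_def using one_plus_mult_pos[OF a]
  by (intro continuous_intros) (auto simp: less_imp_neq[symmetric])

lemma pos_weight_omega: "pos_weight (omega a)"
  unfolding pos_weight_def using continuous_on_omega one_plus_mult_pos[OF a]
  by (force simp: omega_def)

lemma pos_weight_omega_t: "pos_weight (omega_t a)"
  unfolding pos_weight_def using continuous_on_omega_t one_plus_mult_pos[OF a]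
  by (force simp: omega_t_def)

lemma omega_eq_mult_omega_t:
  assumes "\<mu> \<in> {-1..1}"
  shows "omega a \<mu> = (1 + a * \<mu>) * omega_t a \<mu>"
proof -
  have "inverse (x ^ 4) = x * inverse (x ^ 5)" if "x \<noteq> 0" for x :: real
    using that by (simp add: field_simps eval_nat_numeral)
  then show ?thesis
    using one_plus_mult_pos[OF a assms] unfolding omega_def omega_t_def by simp
qed

end

lemma omega_has_derivative:
  assumes "a \<in> {-1<..<1}" "\<mu> \<in> {-1..1}"
  shows "((\<lambda>b. omega b \<mu>) has_real_derivative -4 * \<mu> * omega_t a \<mu>) (at a within X)"
proof -
  define x where "x = 1 + a * \<mu>"
  have "x \<noteq> 0" using one_plus_mult_pos[OF assms] by (simp add: x_def)
  moreover have "omega_t a \<mu> = inverse (x ^ 5)" by (simp add: omega_t_def x_def)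
  ultimately have "- (inverse (x ^ 4) * (of_nat 4 * x ^ (4 - 1) * (0 + 1 * \<mu>)) * inverse (x ^ 4))
      = -4 * \<mu> * omega_t a \<mu>"
    by (simp add: field_simps eval_nat_numeral)
  then show ?thesis
    unfolding omega_def using \<open>x \<noteq> 0\<close>
    by (auto intro!: derivative_eq_intros simp: x_def)
qed

lemma moment_omega_has_derivative:
  assumes a: "a \<in> {-1<..<1}"
  shows "((\<lambda>b. moment (omega b) n) has_real_derivative -4 * moment (omega_t a) (Suc n)) (at a)"
proof -
  let ?U = "{-1<..<1::real}"
  have "((\<lambda>b. integral (cbox (-1) 1) (\<lambda>\<mu>. \<mu> ^ n * omega b \<mu>)) has_real_derivative
      integral (cbox (-1) 1) (\<lambda>\<mu>. \<mu> ^ n * (-4 * \<mu> * omega_t a \<mu>))) (at a within ?U)"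
  proof (rule leibniz_rule_field_derivative[where fx = "\<lambda>b \<mu>. \<mu> ^ n * (-4 * \<mu> * omega_t b \<mu>)"])
    fix b \<mu> assume "b \<in> ?U" "\<mu> \<in> cbox (-1::real) 1"
    then show "((\<lambda>b. \<mu> ^ n * omega b \<mu>) has_real_derivative \<mu> ^ n * (-4 * \<mu> * omega_t b \<mu>))
        (at b within ?U)"
      unfolding cbox_interval by (intro DERIV_cmult omega_has_derivative) auto
  next
    fix b assume "b \<in> ?U"
    then show "(\<lambda>\<mu>. \<mu> ^ n * omega b \<mu>) integrable_on cbox (-1) 1"
      unfolding cbox_interval by (intro integrable_continuous_interval continuous_intros continuous_on_omega)
  next
    have "\<forall>z\<in>?U \<times> cbox (-1) 1. (1 + fst z * snd z) ^ 5 \<noteq> 0"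
      using one_plus_mult_pos by (auto simp: cbox_interval less_imp_neq[symmetric])
    then show "continuous_on (?U \<times> cbox (-1) 1) (\<lambda>(b, \<mu>). \<mu> ^ n * (-4 * \<mu> * omega_t b \<mu>))"
      unfolding omega_t_def case_prod_beta by (intro continuous_intros) auto
  qed (use a in auto)
  then show ?thesis
    using a unfolding moment_def cbox_interval
    by (simp add: at_within_open[of a ?U] mult_ac flip: integral_mult_right)
qed

lemma moment_form_omega_has_derivative:
  assumes a: "a \<in> {-1<..<1}"
    and P: "\<And>i. ((\<lambda>b. coeff (P b) i) has_real_derivative coeff P' i) (at a)"
  shows "((\<lambda>b. moment_form n s (omega b) (P b) q) has_real_derivative
           -4 * moment_form n (Suc s) (omega_t a) (P a) q + moment_form n s (omega a) P' q) (at a)"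
proof -
  have "((\<lambda>b. moment_form n s (omega b) (P b) q) has_real_derivative
      (\<Sum>i\<le>n. \<Sum>j\<le>n. coeff (P a) i * coeff q j * (-4 * moment (omega_t a) (Suc (i + j + s)))
                     + coeff P' i * coeff q j * moment (omega a) (i + j + s))) (at a)"
    unfolding moment_form_def
    by (intro DERIV_sum DERIV_mult' DERIV_cmult_right P moment_omega_has_derivative a)
  then show ?thesis
    unfolding moment_form_def
    by (simp add: sum.distrib sum_subtractf sum_negf sum_distrib_left mult_ac)
qed

lemma moment_form_omega_differentiable:
  assumes a: "a \<in> {-1<..<1}"
    and P: "\<And>i. (\<lambda>b. coeff (P b) i) differentiable (at a)"
    and Q: "\<And>i. (\<lambda>b. coeff (Q b) i) differentiable (at a)"
  shows "(\<lambda>b. moment_form n s (omega b) (P b) (Q b)) differentiable (at a)"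
proof -
  have "(\<lambda>b. moment (omega b) m) differentiable (at a)" for m
    using moment_omega_has_derivative[OF a] real_differentiable_def by blast
  then show ?thesis
    unfolding moment_form_def
    by (intro differentiable_sum ballI finite_atMost differentiable_mult P Q)
qed

lemma coeff_gram_schmidt_omega_differentiable:
  assumes a: "a \<in> {-1<..<1}"
  shows "(\<lambda>b. coeff (gram_schmidt (omega b) k) l) differentiable (at a)"
proof (induction k arbitrary: l rule: less_induct)
  case (less k)
  define N where "N j b = moment_form k 0 (omega b) (monom 1 k) (gram_schmidt (omega b) j)" for j b
  define D where "D j b = moment_form k 0 (omega b) (gram_schmidt (omega b) j) (gram_schmidt (omega b) j)"
    for j b
  have coeff_eq: "(\<lambda>b. coeff (gram_schmidt (omega b) k) l) =
      (\<lambda>b. coeff (monom 1 k) l - (\<Sum>j<k. N j b / D j b * coeff (gram_schmidt (omega b) j) l))"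
    by (subst gram_schmidt.simps) (simp add: coeff_sum N_def D_def)
  have "D j a \<noteq> 0" if "j < k" for j
  proof -
    have "D j a = inner_poly (omega a) (gram_schmidt (omega a) j) (gram_schmidt (omega a) j)"
      unfolding D_def using that
      by (intro moment_form_eq_inner_poly continuous_on_omega a) (auto simp: gram_schmidt_degree)
    also have "\<dots> > 0"
      by (rule inner_poly_self_pos[OF pos_weight_omega[OF a] gram_schmidt_nonzero])
    finally show ?thesis by simp
  qed
  moreover have "N j differentiable (at a)" "D j differentiable (at a)" if "j < k" for j
    unfolding N_def D_def using less that
    by (auto intro!: moment_form_omega_differentiable a)
  ultimately show ?case
    unfolding coeff_eq using less
    by (auto intro!: differentiable_diff differentiable_sum differentiable_mult differentiable_divide)
qed

context
  fixes a :: real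
  assumes a: "a \<in> {-1<..<1}"
begin

lemma phi_eq_gram_schmidt: "phi a = gram_schmidt (omega a)"
  unfolding phi_def by (rule orth_polys_eq_gram_schmidt[OF pos_weight_omega[OF a]])

lemma monic_orth_family_phi: "monic_orth_family (omega a) (phi a)"
  unfolding phi_def by (rule monic_orth_family_orth_polys[OF pos_weight_omega[OF a]])

lemma degree_phi: "degree (phi a k) = k"
  by (rule monic_orth_family_degree[OF monic_orth_family_phi])

lemma monic_orth_family_phi_t: "monic_orth_family (omega_t a) (phi_t a)"
  unfolding phi_t_def by (rule monic_orth_family_orth_polys[OF pos_weight_omega_t[OF a]])

lemma K_eq_inner_poly:
  assumes "degree q \<le> k" "coeff q k = 1"
  shows "K a k k = inner_poly (omega a) q (phi a k)"
  using inner_poly_monic_eq[OF monic_orth_family_phi continuous_on_omega[OF a] assms]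
  by (simp add: K_def inner_poly_def poly_monom)

lemma K_t_eq_inner_poly: "K_t a k k = inner_poly (omega_t a) (phi_t a k) (phi_t a k)"
  using inner_poly_monic_eq[OF monic_orth_family_phi_t continuous_on_omega_t[OF a]]
    monic_orth_family_degree[OF monic_orth_family_phi_t] monic_orth_family_lead[OF monic_orth_family_phi_t]
  by (simp add: K_t_def inner_poly_def poly_monom)

lemma inner_poly_omega_t_mult: "inner_poly (omega_t a) ([:1, a:] * q) p = inner_poly (omega a) q p"
  unfolding inner_poly_def
  by (rule integral_cong) (simp add: omega_eq_mult_omega_t[OF a] algebra_simps)

lemma phi_t_expansion:
  assumes "degree R \<le> Suc k" and "\<And>j. j < k \<Longrightarrow> inner_poly (omega_t a) R (phi_t a j) = 0"
  shows "R = smult (coeff R (Suc k)) (phi_t a (Suc k))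
           + smult (inner_poly (omega_t a) R (phi_t a k) / K_t a k k) (phi_t a k)"
  using monic_orth_family_expansion[OF monic_orth_family_phi_t pos_weight_omega_t[OF a] assms]
  by (simp add: K_t_eq_inner_poly)

end

definition phi_deriv :: "real \<Rightarrow> nat \<Rightarrow> real poly" where
  "phi_deriv a k = (\<Sum>l<k. monom (deriv (\<lambda>b. coeff (phi b k) l) a) l)"

text \<open>The polynomial \<open>Q\<close> with \<open>\<partial>\<^sub>\<alpha>\<Phi>\<^sub>k = \<omega>~ Q\<close>.\<close>
definition Phi_deriv_poly :: "real \<Rightarrow> nat \<Rightarrow> real poly" where
  "Phi_deriv_poly a k = smult (-4) (pCons 0 (phi a k)) + [:1, a:] * phi_deriv a k"

context
  fixes a :: real
  assumes a: "a \<in> {-1<..<1}"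
begin

lemma Phi_recurrence:
  assumes \<mu>: "\<mu> \<in> {-1..1}"
  shows "Phi a k \<mu> = a * Phi_t a (k + 1) \<mu> + (K a k k / K_t a k k) * Phi_t a k \<mu>"
proof -
  note phi = monic_orth_family_phi[OF a] and phi_t = monic_orth_family_phi_t[OF a]
  define R where "R = [:1, a:] * phi a k"
  have "degree R \<le> Suc k"
    unfolding R_def
    by (rule order_trans[OF degree_mult_le]) (simp add: monic_orth_family_degree[OF phi])
  moreover have "coeff R (Suc k) = a"
    using monic_orth_family_degree[OF phi, of k] monic_orth_family_lead[OF phi, of k]
    by (simp add: R_def coeff_eq_0)
  moreover have "inner_poly (omega_t a) R p = inner_poly (omega a) p (phi a k)" for p
    unfolding R_def inner_poly_omega_t_mult[OF a] by (rule inner_poly_commute)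
  moreover have "inner_poly (omega a) (phi_t a j) (phi a k) = 0" if "j < k" for j
    using that by (intro inner_poly_lower_degree_eq_0[OF phi continuous_on_omega[OF a]])
      (simp add: monic_orth_family_degree[OF phi_t])
  moreover have "inner_poly (omega a) (phi_t a k) (phi a k) = K a k k"
    by (rule K_eq_inner_poly[OF a, symmetric])
      (simp_all add: monic_orth_family_degree[OF phi_t] monic_orth_family_lead[OF phi_t])
  ultimately have "R = smult a (phi_t a (Suc k)) + smult (K a k k / K_t a k k) (phi_t a k)"
    using phi_t_expansion[OF a, of R k] by (simp del: mult_pCons_left)
  moreover have "Phi a k \<mu> = omega_t a \<mu> * poly R \<mu>"
    unfolding Phi_def R_def by (simp add: omega_eq_mult_omega_t[OF a \<mu>] algebra_simps)
  ultimately show ?thesis by (simp add: Phi_t_def algebra_simps)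
qed

lemma coeff_phi_deriv_eq_0: "k \<le> l \<Longrightarrow> coeff (phi_deriv a k) l = 0"
  by (simp add: phi_deriv_def coeff_sum coeff_monom)

lemma degree_phi_deriv: "degree (phi_deriv a k) \<le> k"
  by (intro degree_le allI impI coeff_phi_deriv_eq_0) simp

lemma coeff_phi_has_derivative:
  "((\<lambda>b. coeff (phi b k) l) has_real_derivative coeff (phi_deriv a k) l) (at a)"
proof (cases "l < k")
  case True
  let ?c = "\<lambda>b. coeff (gram_schmidt (omega b) k) l"
  have "(?c has_real_derivative deriv ?c a) (at a)"
    using coeff_gram_schmidt_omega_differentiable[OF a] DERIV_deriv_iff_real_differentiable by blast
  then have D: "((\<lambda>b. coeff (phi b k) l) has_real_derivative deriv ?c a) (at a)"
    by (rule has_field_derivative_transform_within_open[of _ _ _ "{-1<..<1}"])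
      (use a in \<open>auto simp: phi_eq_gram_schmidt\<close>)
  moreover have "coeff (phi_deriv a k) l = deriv ?c a"
    using True DERIV_imp_deriv[OF D] by (simp add: phi_deriv_def coeff_sum coeff_monom)
  ultimately show ?thesis by simp
next
  case False
  have "((\<lambda>b. coeff (phi b k) l) has_real_derivative 0) (at a)"
  proof (rule has_field_derivative_transform_within_open[OF DERIV_const _ a])
    fix b :: real assume "b \<in> {-1<..<1}"
    then show "(if l = k then 1 else 0) = coeff (phi b k) l"
      using False monic_orth_family_degree[OF monic_orth_family_phi, of b k]
        monic_orth_family_lead[OF monic_orth_family_phi, of b k]
      by (auto simp: coeff_eq_0)
  qed simp
  then show ?thesis using False by (simp add: coeff_phi_deriv_eq_0)
qed

lemma poly_phi_has_derivative:
  "((\<lambda>b. poly (phi b k) \<mu>) has_real_derivative poly (phi_deriv a k) \<mu>) (at a)"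
proof -
  have "((\<lambda>b. \<Sum>l\<le>k. coeff (phi b k) l * \<mu> ^ l) has_real_derivative
      (\<Sum>l\<le>k. coeff (phi_deriv a k) l * \<mu> ^ l)) (at a)"
    by (intro DERIV_sum DERIV_cmult_right coeff_phi_has_derivative)
  then show ?thesis
    unfolding poly_eq_sum_coeff_atMost[OF degree_phi_deriv]
  proof (rule has_field_derivative_transform_within_open[OF _ _ a])
    fix b :: real assume "b \<in> {-1<..<1}"
    then show "(\<Sum>l\<le>k. coeff (phi b k) l * \<mu> ^ l) = poly (phi b k) \<mu>"
      by (simp add: poly_eq_sum_coeff_atMost[of "phi b k" k] degree_phi)
  qed simp
qed

lemma Phi_has_derivative_poly:
  assumes \<mu>: "\<mu> \<in> {-1..1}"
  shows "((\<lambda>b. Phi b k \<mu>) has_real_derivative omega_t a \<mu> * poly (Phi_deriv_poly a k) \<mu>) (at a)"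
proof -
  have "((\<lambda>b. omega b \<mu> * poly (phi b k) \<mu>) has_real_derivative
      omega a \<mu> * poly (phi_deriv a k) \<mu> + -4 * \<mu> * omega_t a \<mu> * poly (phi a k) \<mu>) (at a)"
    by (intro DERIV_mult' omega_has_derivative[OF a \<mu>] poly_phi_has_derivative)
  then show ?thesis
    unfolding Phi_def Phi_deriv_poly_def
    by (simp add: omega_eq_mult_omega_t[OF a \<mu>] algebra_simps)
qed

lemma inner_poly_phi_has_derivative:
  assumes p: "degree p \<le> k"
  shows "((\<lambda>b. inner_poly (omega b) (phi b k) p) has_real_derivative
           inner_poly (omega_t a) (Phi_deriv_poly a k) p) (at a)"
proof -
  have "inner_poly (omega_t a) (pCons 0 (phi a k)) p = moment_form k (Suc 0) (omega_t a) (phi a k) p"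
    by (simp add: moment_form_eq_integral[OF continuous_on_omega_t[OF a] _ p] degree_phi[OF a]
        inner_poly_def mult_ac)
  moreover have "inner_poly (omega_t a) ([:1, a:] * phi_deriv a k) p
      = moment_form k 0 (omega a) (phi_deriv a k) p"
    by (simp add: moment_form_eq_inner_poly[OF continuous_on_omega[OF a] degree_phi_deriv p]
        inner_poly_omega_t_mult[OF a] del: mult_pCons_left)
  ultimately have "inner_poly (omega_t a) (Phi_deriv_poly a k) p
      = -4 * moment_form k (Suc 0) (omega_t a) (phi a k) p + moment_form k 0 (omega a) (phi_deriv a k) p"
    unfolding Phi_deriv_poly_def inner_poly_add_left[OF continuous_on_omega_t[OF a]]
      inner_poly_smult_left
    by simp
  then have "((\<lambda>b. moment_form k 0 (omega b) (phi b k) p) has_real_derivative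
      inner_poly (omega_t a) (Phi_deriv_poly a k) p) (at a)"
    using moment_form_omega_has_derivative[OF a coeff_phi_has_derivative] by simp
  then show ?thesis
  proof (rule has_field_derivative_transform_within_open[OF _ _ a])
    fix b :: real assume b: "b \<in> {-1<..<1}"
    then show "moment_form k 0 (omega b) (phi b k) p = inner_poly (omega b) (phi b k) p"
      by (simp add: moment_form_eq_inner_poly[OF continuous_on_omega[OF b] _ p] degree_phi)
  qed simp
qed

lemma inner_poly_Phi_deriv_poly_lower:
  assumes "j < k"
  shows "inner_poly (omega_t a) (Phi_deriv_poly a k) (phi_t a j) = 0"
proof -
  have "((\<lambda>b. 0) has_real_derivative inner_poly (omega_t a) (Phi_deriv_poly a k) (phi_t a j)) (at a)"
  proof (rule has_field_derivative_transform_within_open[OF inner_poly_phi_has_derivative _ a])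
    show "degree (phi_t a j) \<le> k"
      using assms by (simp add: monic_orth_family_degree[OF monic_orth_family_phi_t[OF a]])
    fix b :: real assume b: "b \<in> {-1<..<1}"
    show "inner_poly (omega b) (phi b k) (phi_t a j) = 0"
      using inner_poly_lower_degree_eq_0[OF monic_orth_family_phi[OF b] continuous_on_omega[OF b]]
        assms inner_poly_commute
      by (metis monic_orth_family_degree[OF monic_orth_family_phi_t[OF a]])
  qed simp
  then show ?thesis using DERIV_const DERIV_unique by blast
qed

lemma K_has_derivative:
  "((\<lambda>b. K b k k) has_real_derivative inner_poly (omega_t a) (Phi_deriv_poly a k) (phi_t a k)) (at a)"
proof (rule has_field_derivative_transform_within_open[OF inner_poly_phi_has_derivative _ a])
  note phi_t = monic_orth_family_phi_t[OF a]
  show "degree (phi_t a k) \<le> k" by (simp add: monic_orth_family_degree[OF phi_t])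
  fix b :: real assume b: "b \<in> {-1<..<1}"
  show "inner_poly (omega b) (phi b k) (phi_t a k) = K b k k"
    using K_eq_inner_poly[OF b, of "phi_t a k" k] inner_poly_commute
    by (simp add: monic_orth_family_degree[OF phi_t] monic_orth_family_lead[OF phi_t])
qed simp

lemma Phi_deriv_poly_expansion:
  "Phi_deriv_poly a k = smult (-4) (phi_t a (Suc k))
                        + smult (deriv (\<lambda>b. K b k k) a / K_t a k k) (phi_t a k)"
proof -
  have "degree ([:1, a:] * phi_deriv a k) \<le> 1 + k"
    by (intro order_trans[OF degree_mult_le] add_mono degree_phi_deriv) simp
  then have deg: "degree (Phi_deriv_poly a k) \<le> Suc k"
    unfolding Phi_deriv_poly_def
    by (intro degree_add_le order_trans[OF degree_smult_le]) (simp_all add: degree_phi[OF a])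
  have "coeff (Phi_deriv_poly a k) (Suc k) = -4"
    using degree_phi[OF a, of k] monic_orth_family_lead[OF monic_orth_family_phi[OF a], of k]
    by (simp add: Phi_deriv_poly_def coeff_phi_deriv_eq_0)
  then show ?thesis
    using phi_t_expansion[OF a deg inner_poly_Phi_deriv_poly_lower]
      DERIV_imp_deriv[OF K_has_derivative]
    by simp
qed

lemma Phi_has_derivative:
  assumes \<mu>: "\<mu> \<in> {-1..1}"
  shows "((\<lambda>b. Phi b k \<mu>) has_real_derivative
           -4 * Phi_t a (k + 1) \<mu> + (1 / K_t a k k) * deriv (\<lambda>b. K b k k) a * Phi_t a k \<mu>) (at a)"
  using Phi_has_derivative_poly[OF \<mu>, of k]
  by (subst (asm) Phi_deriv_poly_expansion) (simp add: Phi_t_def algebra_simps)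

end

theorem lemma2:
  fixes \<alpha> :: real and k :: nat
  assumes "-1 < \<alpha>" and "\<alpha> < 1"
  shows "\<forall>\<mu>\<in>{-1..1}.
           Phi \<alpha> k \<mu> = \<alpha> * Phi_t \<alpha> (k+1) \<mu> + (K \<alpha> k k / K_t \<alpha> k k) * Phi_t \<alpha> k \<mu>
         \<and> ((\<lambda>a. Phi a k \<mu>) has_real_derivative
              (-4 * Phi_t \<alpha> (k+1) \<mu>
               + (1 / K_t \<alpha> k k) * deriv (\<lambda>a. K a k k) \<alpha> * Phi_t \<alpha> k \<mu>)) (at \<alpha>)"
  using Phi_recurrence Phi_has_derivative assms by simp

end
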